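(* Let $A$ be a treatment taking values in a finite set $\mathcal{A}=\{a_1,\ldots,a_J\}$, let $X$ be a vector of measured pre-treatment covariates, and for each $a\in\mathcal{A}$ let $Y(a)$ be the potential outcome under treatment $a$, with observed binary outcome $Y=\sum_{j=1}^J Y(a_j)\mathbb{1}(A=a_j)$. Fix $x$ with $p_m:=\mathbb{P}(A=a_m\mid X=x)\in(0,1)$ for all $m$. For $a,a'\in\mathcal{A}$ with $a\neq a'$ define the confounding function $$c(a,a',x)=\mathbb{E}[Y(a)\mid A=a,X=x]-\mathbb{E}[Y(a)\mid A=a',X=x].$$ Consider the pairwise treatment effect between $a_j\neq a_k\in\mathcal{A}$ on the risk-difference scale, and suppose $Y(a)$ is not conditionally independent of $A$ given $X$ (treatment assignment is not ignorable). Then the bias incurred by ignoring unmeasured confounding, namely $$\mathrm{Bias}(a_j,a_k)=\mathbb{E}[Y\mid A=a_j,X=x]-\mathbb{E}[Y\mid A=a_k,X=x]-\mathbb{E}[Y(a_j)-Y(a_k)\mid X=x],$$ equals $$\mathrm{Bias}(a_j,a_k)=-p_j\,c(a_k,a_j,x)+p_k\,c(a_j,a_k,x)-\sum_{l:\,a_l\in\mathcal{A}\setminus\{a_j,a_k\}}p_l\{c(a_k,a_l,x)-c(a_j,a_l,x)\}.$$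
   Context: Potential outcomes framework: each unit has potential outcomes $Y(a_1),\ldots,Y(a_J)$, of which only the one for the received treatment is observed. The generalized propensity scores $\mathbb{P}(A=a_m\mid X=x)$ sum to 1 over $m$. The stable unit treatment value assumption (each unit's potential outcomes do not depend on other units' treatments) and overlap ($0<\mathbb{P}(A=a\mid X)<1$ for all $a$) are maintained. *)

theory Defs
  imports "HOL-Probability.Probability"
begin

text \<open>All quantities are conditional on X = x: the probability space M is the
conditional distribution of the unit given X = x.\<close>

definition tprob :: "'w measure \<Rightarrow> ('w \<Rightarrow> 'a) \<Rightarrow> 'a \<Rightarrow> real" where
  "tprob M A a = measure M {w \<in> space M. A w = a}"

definition cexp_given :: "'w measure \<Rightarrow> ('w \<Rightarrow> real) \<Rightarrow> ('w \<Rightarrow> 'a) \<Rightarrow> 'a \<Rightarrow> real" where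
  "cexp_given M f A a =
     (\<integral>w. indicator {w \<in> space M. A w = a} w * f w \<partial>M) / tprob M A a"

definition confounding :: "'w measure \<Rightarrow> ('a \<Rightarrow> 'w \<Rightarrow> real) \<Rightarrow> ('w \<Rightarrow> 'a) \<Rightarrow> 'a \<Rightarrow> 'a \<Rightarrow> real" where
  "confounding M Yp A a a' = cexp_given M (Yp a) A a - cexp_given M (Yp a) A a'"

definition indep_rv :: "'w measure \<Rightarrow> ('w \<Rightarrow> real) \<Rightarrow> ('w \<Rightarrow> 'a) \<Rightarrow> bool" where
  "indep_rv M Z A \<longleftrightarrow> (\<forall>B\<in>sets borel. \<forall>S.
      measure M ({w \<in> space M. Z w \<in> B} \<inter> {w \<in> space M. A w \<in> S})
      = measure M {w \<in> space M. Z w \<in> B} * measure M {w \<in> space M. A w \<in> S})"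

end

theory Submission
  imports Defs
begin

text \<open>Conditioning on the events {A = a}, which partition the space, gives
E[Y(a)] = \<Sum>l. p_l E[Y(a) | A = l], and consistency gives E[Y | A = a] = E[Y(a) | A = a].
Hence the bias is E[Y(a_j) | A = a_j] - E[Y(a_k) | A = a_k] - \<Sum>l. p_l (E[Y(a_j) | A = l] - E[Y(a_k) | A = l]).
Since \<Sum>l. p_l = 1, this is -\<Sum>l. p_l (c(a_k, l) - c(a_j, l)); as c(a, a) = 0, the terms l = a_j
and l = a_k are the two isolated terms of the formula.\<close>

lemma sets_treatment_event:
  assumes "A \<in> measurable M (count_space UNIV)"
  shows "{w \<in> space M. A w = a} \<in> sets M"
  using measurable_sets[OF assms, of "{a}"] by (simp add: vimage_def Int_def conj_commute)

lemma cexp_given_cong: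
  assumes "\<And>w. w \<in> space M \<Longrightarrow> A w = a \<Longrightarrow> f w = g w"
  shows "cexp_given M f A a = cexp_given M g A a"
  unfolding cexp_given_def
  by (rule arg_cong[where f = "\<lambda>x. x / tprob M A a"], rule Bochner_Integration.integral_cong)
     (auto simp: indicator_def assms)

lemma integral_eq_sum_tprob_cexp_given:
  fixes f :: "'w \<Rightarrow> real"
  assumes "integrable M f"
    and A: "A \<in> measurable M (count_space UNIV)"
    and "finite T"
    and "\<And>w. w \<in> space M \<Longrightarrow> A w \<in> T"
    and "\<And>a. a \<in> T \<Longrightarrow> tprob M A a \<noteq> 0"
  shows "(\<integral>w. f w \<partial>M) = (\<Sum>a\<in>T. tprob M A a * cexp_given M f A a)"
proof -
  let ?S = "\<lambda>a. {w \<in> space M. A w = a}"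
  have indicator_sum: "(\<Sum>a\<in>T. indicator (?S a) w * f w) = f w" if "w \<in> space M" for w
  proof -
    have "(\<Sum>a\<in>T. indicator (?S a) w * f w) = (\<Sum>a\<in>T. if A w = a then f w else 0)"
      using that by (intro sum.cong) (auto simp: indicator_def)
    then show ?thesis
      using assms(3,4) that by simp
  qed
  have "(\<integral>w. f w \<partial>M) = (\<integral>w. (\<Sum>a\<in>T. indicator (?S a) w * f w) \<partial>M)"
    by (rule Bochner_Integration.integral_cong) (simp_all add: indicator_sum)
  also have "\<dots> = (\<Sum>a\<in>T. \<integral>w. indicator (?S a) w * f w \<partial>M)"
    using integrable_mult_indicator[OF sets_treatment_event[OF A] assms(1)]
    by (intro Bochner_Integration.integral_sum) simp
  also have "\<dots> = (\<Sum>a\<in>T. tprob M A a * cexp_given M f A a)"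
    using assms(5) by (intro sum.cong) (simp_all add: cexp_given_def)
  finally show ?thesis .
qed

lemma sum_tprob_eq_1:
  assumes "prob_space M"
    and "A \<in> measurable M (count_space UNIV)"
    and "finite T"
    and "\<And>w. w \<in> space M \<Longrightarrow> A w \<in> T"
    and "\<And>a. a \<in> T \<Longrightarrow> tprob M A a \<noteq> 0"
  shows "(\<Sum>a\<in>T. tprob M A a) = 1"
proof -
  interpret prob_space M by fact
  have "1 = (\<integral>w. 1 \<partial>M :: real)"
    by (simp add: prob_space)
  also have "\<dots> = (\<Sum>a\<in>T. tprob M A a * cexp_given M (\<lambda>_. 1) A a)"
    using assms(2-5) by (intro integral_eq_sum_tprob_cexp_given) auto
  also have "\<dots> = (\<Sum>a\<in>T. tprob M A a)"
    using assms(5) sets_treatment_event[OF assms(2)]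
    by (intro sum.cong) (simp_all add: cexp_given_def tprob_def)
  finally show ?thesis ..
qed

text \<open>Here p l stands for P(A = l) and e a l for E[Y(a) | A = l].\<close>

lemma bias_decomposition:
  fixes p :: "'a \<Rightarrow> real" and e :: "'a \<Rightarrow> 'a \<Rightarrow> real"
  assumes "finite T" and "aj \<in> T" and "ak \<in> T" and "aj \<noteq> ak"
    and "(\<Sum>l\<in>T. p l) = 1"
  shows "e aj aj - e ak ak - ((\<Sum>l\<in>T. p l * e aj l) - (\<Sum>l\<in>T. p l * e ak l))
       = - p aj * (e ak ak - e ak aj) + p ak * (e aj aj - e aj ak)
         - (\<Sum>l\<in>T - {aj, ak}. p l * ((e ak ak - e ak l) - (e aj aj - e aj l)))"
proof -
  let ?g = "\<lambda>l. p l * ((e ak ak - e ak l) - (e aj aj - e aj l))"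
  have "(\<Sum>l\<in>T. ?g l) = (e ak ak - e aj aj) * (\<Sum>l\<in>T. p l)
          - ((\<Sum>l\<in>T. p l * e ak l) - (\<Sum>l\<in>T. p l * e aj l))"
    by (simp add: algebra_simps sum.distrib sum_subtractf sum_distrib_left sum_distrib_right)
  also have "\<dots> = - (e aj aj - e ak ak - ((\<Sum>l\<in>T. p l * e aj l) - (\<Sum>l\<in>T. p l * e ak l)))"
    using assms(5) by simp
  finally have full: "e aj aj - e ak ak - ((\<Sum>l\<in>T. p l * e aj l) - (\<Sum>l\<in>T. p l * e ak l))
      = - (\<Sum>l\<in>T. ?g l)" by simp
  have "(\<Sum>l\<in>T. ?g l) = ?g aj + ?g ak + (\<Sum>l\<in>T - {aj, ak}. ?g l)"
    using assms(1-4)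
    by (simp add: sum.remove[of T aj] sum.remove[of "T - {aj}" ak] Diff_insert2[symmetric] insert_commute)
  with full show ?thesis
    by (simp add: algebra_simps)
qed

theorem theorem1:
  fixes M :: "'w measure" and T :: "'a set" and A :: "'w \<Rightarrow> 'a"
    and Yp :: "'a \<Rightarrow> 'w \<Rightarrow> real" and Y :: "'w \<Rightarrow> real" and aj ak :: 'a
  assumes "prob_space M"
    and "finite T"
    and "A \<in> measurable M (count_space UNIV)"
    and "\<And>w. w \<in> space M \<Longrightarrow> A w \<in> T"
    and "\<And>a. a \<in> T \<Longrightarrow> Yp a \<in> borel_measurable M"
    and "\<And>a w. a \<in> T \<Longrightarrow> w \<in> space M \<Longrightarrow> Yp a w \<in> {0, 1}"
    and "\<And>w. w \<in> space M \<Longrightarrow> Y w = (\<Sum>a\<in>T. Yp a w * (if A w = a then 1 else 0))"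
    and "\<And>a. a \<in> T \<Longrightarrow> 0 < tprob M A a \<and> tprob M A a < 1"
    and "aj \<in> T" and "ak \<in> T" and "aj \<noteq> ak"
    and "\<not> (\<forall>a\<in>T. indep_rv M (Yp a) A)"
  shows "cexp_given M Y A aj - cexp_given M Y A ak - (\<integral>w. Yp aj w - Yp ak w \<partial>M)
       = - tprob M A aj * confounding M Yp A ak aj + tprob M A ak * confounding M Yp A aj ak
         - (\<Sum>l\<in>T - {aj, ak}. tprob M A l * (confounding M Yp A ak l - confounding M Yp A aj l))"
proof -
  interpret prob_space M by fact
  have tprob_nonzero: "tprob M A a \<noteq> 0" if "a \<in> T" for a
    using assms(8)[OF that] by simp
  have integrable: "integrable M (Yp a)" if "a \<in> T" for a
    using assms(5,6)[OF that] by (intro integrable_const_bound[where B = 1]) fastforce+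
  have mean: "(\<integral>w. Yp a w \<partial>M) = (\<Sum>l\<in>T. tprob M A l * cexp_given M (Yp a) A l)" if "a \<in> T" for a
    by (rule integral_eq_sum_tprob_cexp_given[OF integrable[OF that] assms(3,2,4) tprob_nonzero])
  have consistency: "cexp_given M Y A a = cexp_given M (Yp a) A a" if "a \<in> T" for a
    using assms(2,7) that by (intro cexp_given_cong) (simp add: if_distrib sum.delta' cong: if_cong)
  have mean_difference: "(\<integral>w. Yp aj w - Yp ak w \<partial>M)
      = (\<Sum>l\<in>T. tprob M A l * cexp_given M (Yp aj) A l) - (\<Sum>l\<in>T. tprob M A l * cexp_given M (Yp ak) A l)"
    using integrable assms(9,10) by (simp add: Bochner_Integration.integral_diff mean)
  show ?thesis
    unfolding consistency[OF assms(9)] consistency[OF assms(10)] mean_difference confounding_def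
    by (rule bias_decomposition[where e = "\<lambda>a l. cexp_given M (Yp a) A l"])
       (intro sum_tprob_eq_1 assms(1-4,9-11) tprob_nonzero)+
qed

end
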